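(* Let $x_1,x_2,x_3>0$, $\gamma,\delta>0$ with $\gamma\ne1\ne\delta$, and let $$\mathbf{Q}=\begin{pmatrix}1&\delta x_1&x_2&x_3\\ 1/(\delta x_1)&1&x_2/x_1&x_3/x_1\\ 1/x_2&x_1/x_2&1&\gamma x_3/x_2\\ 1/x_3&x_1/x_3&x_2/(\gamma x_3)&1\end{pmatrix}$$ with principal right eigenvector $\mathbf{w}^{EM}$. If $\delta,\gamma<1$, then $w_2^{EM}/w_3^{EM}>x_2/x_1$.
   Context: The principal right eigenvector is the positive (Perron) eigenvector belonging to the largest eigenvalue. *)

theory Defs
  imports Complex_Main
begin

text \<open>Matrices of fixed size n are represented as functions nat => nat => real,
  indexed by 1..n (as in the paper); vectors as functions nat => real on 1..n.\<close>

definition Qmat :: "real \<Rightarrow> real \<Rightarrow> real \<Rightarrow> real \<Rightarrow> real \<Rightarrow> nat \<Rightarrow> nat \<Rightarrow> real" where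
  "Qmat x1 x2 x3 \<gamma> \<delta> i j =
     [[1,              \<delta> * x1,       x2,                x3],
      [1 / (\<delta> * x1),   1,            x2 / x1,           x3 / x1],
      [1 / x2,         x1 / x2,      1,                 \<gamma> * x3 / x2],
      [1 / x3,         x1 / x3,      x2 / (\<gamma> * x3),   1]] ! (i - 1) ! (j - 1)"

definition principal_right_eigenvector :: "(nat \<Rightarrow> nat \<Rightarrow> real) \<Rightarrow> nat \<Rightarrow> (nat \<Rightarrow> real) \<Rightarrow> bool" where
  "principal_right_eigenvector A n w \<longleftrightarrow>
     (\<forall>i\<in>{1..n}. w i > 0) \<and>
     (\<exists>r::real.
        (\<forall>i\<in>{1..n}. (\<Sum>j=1..n. A i j * w j) = r * w i) \<and>
        (\<forall>(\<mu>::complex) (v::nat \<Rightarrow> complex).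
            (\<exists>i\<in>{1..n}. v i \<noteq> 0) \<and>
            (\<forall>i\<in>{1..n}. (\<Sum>j=1..n. complex_of_real (A i j) * v j) = \<mu> * v i)
            \<longrightarrow> cmod \<mu> \<le> r))"

end

theory Submission
  imports Defs
begin

text \<open>Scaling the eigenvalue equations of rows 2 and 3 by \<open>x1\<close> and \<open>x2\<close> makes their
  coefficients agree except in the entries perturbed by \<open>\<delta>\<close> and \<open>\<gamma>\<close>; subtracting gives
  \<open>r (x1 w2 - x2 w3) = (1/\<delta> - 1) w1 + (1 - \<gamma>) x3 w4\<close>, whose right-hand side is positive
  when \<open>\<delta>, \<gamma> < 1\<close>.\<close>

lemma sum_atLeastAtMost_1_4: "(\<Sum>j::nat = 1..4. f j) = f 1 + f 2 + f 3 + (f 4 :: real)"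
proof -
  have "{1..4::nat} = {1, 2, 3, 4}" by auto
  then show ?thesis by simp
qed

lemma positive_eigenvector_eigenvalue_pos:
  fixes A :: "nat \<Rightarrow> nat \<Rightarrow> real"
  assumes "n \<ge> 1"
    and A_pos: "\<And>i j. i \<in> {1..n} \<Longrightarrow> j \<in> {1..n} \<Longrightarrow> A i j > 0"
    and w_pos: "\<And>i. i \<in> {1..n} \<Longrightarrow> w i > 0"
    and eigen: "\<And>i. i \<in> {1..n} \<Longrightarrow> (\<Sum>j = 1..n. A i j * w j) = r * w i"
  shows "r > 0"
proof -
  have one: "1 \<in> {1..n}" using \<open>n \<ge> 1\<close> by simp
  have "(\<Sum>j = 1..n. A 1 j * w j) > 0"
    using one A_pos w_pos by (intro sum_pos) auto
  then have "r * w 1 > 0" using eigen[OF one] by simp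
  then show ?thesis using w_pos[OF one] by (simp add: zero_less_mult_iff)
qed

lemma Qmat_pos:
  assumes "x1 > 0" "x2 > 0" "x3 > 0" "\<gamma> > 0" "\<delta> > 0" "i \<in> {1..4}" "j \<in> {1..4}"
  shows "Qmat x1 x2 x3 \<gamma> \<delta> i j > 0"
proof -
  have "i \<in> {1, 2, 3, 4}" "j \<in> {1, 2, 3, 4}" using assms(6,7) by auto
  then show ?thesis using assms(1-5) by (auto simp: Qmat_def)
qed

lemma Qmat_eigen_row_difference:
  fixes x1 x2 x3 \<gamma> \<delta> r :: real and w :: "nat \<Rightarrow> real"
  assumes "x1 \<noteq> 0" "x2 \<noteq> 0"
    and eigen: "\<And>i. i \<in> {1..4} \<Longrightarrow> (\<Sum>j = 1..4. Qmat x1 x2 x3 \<gamma> \<delta> i j * w j) = r * w i"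
  shows "r * (x1 * w 2 - x2 * w 3) = (1 / \<delta> - 1) * w 1 + (1 - \<gamma>) * x3 * w 4"
proof -
  have row2: "w 1 / (\<delta> * x1) + w 2 + x2 / x1 * w 3 + x3 / x1 * w 4 = r * w 2"
    using eigen[of 2] by (simp only: sum_atLeastAtMost_1_4, simp add: Qmat_def)
  have row3: "w 1 / x2 + x1 / x2 * w 2 + w 3 + \<gamma> * x3 / x2 * w 4 = r * w 3"
    using eigen[of 3] by (simp only: sum_atLeastAtMost_1_4, simp add: Qmat_def)
  have "w 1 / \<delta> + x1 * w 2 + x2 * w 3 + x3 * w 4
      = x1 * (w 1 / (\<delta> * x1) + w 2 + x2 / x1 * w 3 + x3 / x1 * w 4)"
    using assms(1) by (simp add: field_simps)
  also have "\<dots> = r * (x1 * w 2)" using row2 by simp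
  finally have scaled2: "w 1 / \<delta> + x1 * w 2 + x2 * w 3 + x3 * w 4 = r * (x1 * w 2)" .
  have "w 1 + x1 * w 2 + x2 * w 3 + \<gamma> * x3 * w 4
      = x2 * (w 1 / x2 + x1 / x2 * w 2 + w 3 + \<gamma> * x3 / x2 * w 4)"
    using assms(2) by (simp add: field_simps)
  also have "\<dots> = r * (x2 * w 3)" using row3 by simp
  finally have "w 1 + x1 * w 2 + x2 * w 3 + \<gamma> * x3 * w 4 = r * (x2 * w 3)" .
  with scaled2 show ?thesis by (simp add: algebra_simps)
qed

theorem mainTheorem14:
  fixes x1 x2 x3 \<gamma> \<delta> :: real and w :: "nat \<Rightarrow> real"
  assumes "x1 > 0" "x2 > 0" "x3 > 0" "\<gamma> > 0" "\<delta> > 0" "\<gamma> \<noteq> 1" "\<delta> \<noteq> 1"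
    and "principal_right_eigenvector (Qmat x1 x2 x3 \<gamma> \<delta>) 4 w"
    and "\<delta> < 1" "\<gamma> < 1"
  shows "w 2 / w 3 > x2 / x1"
proof -
  obtain r where w_pos: "\<And>i. i \<in> {1..4} \<Longrightarrow> w i > 0"
    and eigen: "\<And>i. i \<in> {1..4} \<Longrightarrow> (\<Sum>j = 1..4. Qmat x1 x2 x3 \<gamma> \<delta> i j * w j) = r * w i"
    using assms(8) unfolding principal_right_eigenvector_def by blast
  have "r > 0"
    using positive_eigenvector_eigenvalue_pos[OF _ Qmat_pos w_pos eigen] assms(1-5) by simp
  have "(1 / \<delta> - 1) * w 1 > 0" "(1 - \<gamma>) * x3 * w 4 > 0"
    using assms(3,5,9,10) w_pos[of 1] w_pos[of 4] by simp_all
  then have "r * (x1 * w 2 - x2 * w 3) > 0"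
    using Qmat_eigen_row_difference[OF _ _ eigen] assms(1,2) by simp
  then have "x2 * w 3 < x1 * w 2" using \<open>r > 0\<close> by (simp add: zero_less_mult_iff)
  then show ?thesis using assms(1) w_pos[of 3] by (simp add: field_simps)
qed

end
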